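(* Let $X$ be a complex Banach space, $T$ a bounded linear operator on $X$, and $x_0\in X$ a convex-cyclic vector for $T$. Let $\varepsilon>0$ and $N_0\in\mathbb{N}$. Then for every $x\in X$ there is a convex polynomial $P_k(t)=a_0+a_1t+\cdots+a_kt^k$ with $a_k>0$ and $k>N_0$ such that $\Vert P_k(T)(x_0)-x\Vert<\varepsilon$.
   Context: A convex polynomial is a polynomial $\sum_{i=0}^k a_it^i$ with $a_i\ge 0$ and $\sum_i a_i=1$. A vector $x_0$ is convex-cyclic for $T$ if the convex hull of $\{T^n x_0:n\ge 0\}$, i.e. $\{P(T)x_0: P \text{ a convex polynomial}\}$, is dense in $X$. *)

theory Defs
  imports "HOL-Analysis.Analysis"
begin

text \<open>A complex structure on a real Banach space: a complex scalar multiplication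
  extending the real one, satisfying the vector space axioms and norm homogeneity.
  (Isabelle/HOL has no type class of complex normed spaces.)\<close>
definition complex_scaling :: "(complex \<Rightarrow> 'a::real_normed_vector \<Rightarrow> 'a) \<Rightarrow> bool" where
  "complex_scaling sc \<longleftrightarrow>
     (\<forall>r x. sc (complex_of_real r) x = r *\<^sub>R x) \<and>
     (\<forall>a x y. sc a (x + y) = sc a x + sc a y) \<and>
     (\<forall>a b x. sc (a + b) x = sc a x + sc b x) \<and>
     (\<forall>a b x. sc (a * b) x = sc a (sc b x)) \<and>
     (\<forall>a x. norm (sc a x) = cmod a * norm x)"

definition bounded_complex_linear :: "(complex \<Rightarrow> 'a::real_normed_vector \<Rightarrow> 'a) \<Rightarrow> ('a \<Rightarrow> 'a) \<Rightarrow> bool" where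
  "bounded_complex_linear sc T \<longleftrightarrow> bounded_linear T \<and> (\<forall>a x. T (sc a x) = sc a (T x))"

definition convex_coeffs :: "(nat \<Rightarrow> real) \<Rightarrow> nat \<Rightarrow> bool" where
  "convex_coeffs a k \<longleftrightarrow> (\<forall>i\<le>k. a i \<ge> 0) \<and> (\<Sum>i\<le>k. a i) = 1"

definition poly_op :: "(nat \<Rightarrow> real) \<Rightarrow> nat \<Rightarrow> ('a::real_vector \<Rightarrow> 'a) \<Rightarrow> 'a \<Rightarrow> 'a" where
  "poly_op a k T x = (\<Sum>i\<le>k. a i *\<^sub>R (T ^^ i) x)"

definition convex_cyclic :: "('a::real_normed_vector \<Rightarrow> 'a) \<Rightarrow> 'a \<Rightarrow> bool" where
  "convex_cyclic T x0 \<longleftrightarrow> closure (convex hull {(T ^^ n) x0 | n. True}) = UNIV"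

end

theory Submission
  imports Defs
begin

text \<open>Pick a convex combination \<open>y\<close> of \<open>x\<^sub>0, T x\<^sub>0, \<dots>, T\<^sup>K x\<^sub>0\<close> within \<open>\<epsilon>\<close> of \<open>x\<close> and a
  degree \<open>k > max K N\<^sub>0\<close>. Moving \<open>y\<close> a short distance \<open>d\<close> along the segment towards
  \<open>T\<^sup>k x\<^sub>0\<close> gives the convex combination \<open>(1 - d) y + d T\<^sup>k x\<^sub>0\<close>, which is still within
  \<open>\<epsilon>\<close> of \<open>x\<close> and has leading coefficient at least \<open>d > 0\<close>. Neither linearity of \<open>T\<close> nor
  completeness of the space plays any role.\<close>

definition convex_combinations :: "(nat \<Rightarrow> 'a::real_vector) \<Rightarrow> 'a set" where
  "convex_combinations f = {y. \<exists>a k. convex_coeffs a k \<and> y = (\<Sum>i\<le>k. a i *\<^sub>R f i)}"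

lemma convex_coeffs_unit: "convex_coeffs (\<lambda>i. if i = k then 1 else 0) k"
  by (simp add: convex_coeffs_def)

lemma sum_scaleR_unit:
  fixes f :: "nat \<Rightarrow> 'a::real_vector"
  shows "(\<Sum>i\<le>k. (if i = k then 1 else 0) *\<^sub>R f i) = f k"
  by (simp add: if_distrib[of "\<lambda>c. c *\<^sub>R _"] cong: if_cong)

lemma convex_coeffs_mix:
  assumes "convex_coeffs a k" "convex_coeffs b k" "0 \<le> u" "u \<le> 1"
  shows "convex_coeffs (\<lambda>i. (1 - u) * a i + u * b i) k"
  using assms by (simp add: convex_coeffs_def sum.distrib sum_distrib_left[symmetric])

lemma sum_scaleR_mix:
  fixes f :: "nat \<Rightarrow> 'a::real_vector"
  shows "(\<Sum>i\<le>k. ((1 - u) * a i + u * b i) *\<^sub>R f i) =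
     (1 - u) *\<^sub>R (\<Sum>i\<le>k. a i *\<^sub>R f i) + u *\<^sub>R (\<Sum>i\<le>k. b i *\<^sub>R f i)"
  unfolding scaleR_add_left sum.distrib scaleR_sum_right by simp

lemma convex_coeffs_pad:
  fixes f :: "nat \<Rightarrow> 'a::real_vector"
  assumes "convex_coeffs a K" "K \<le> N"
  obtains b where "convex_coeffs b N" "(\<Sum>i\<le>N. b i *\<^sub>R f i) = (\<Sum>i\<le>K. a i *\<^sub>R f i)"
proof
  let ?b = "\<lambda>i. if i \<le> K then a i else 0"
  have "(\<Sum>i\<le>N. ?b i) = (\<Sum>i\<le>K. a i)"
    using assms(2) by (intro sum.mono_neutral_cong_right) auto
  with assms(1) show "convex_coeffs ?b N"
    by (simp add: convex_coeffs_def)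
  show "(\<Sum>i\<le>N. ?b i *\<^sub>R f i) = (\<Sum>i\<le>K. a i *\<^sub>R f i)"
    using assms(2) by (intro sum.mono_neutral_cong_right) auto
qed

lemma convex_convex_combinations: "convex (convex_combinations f)"
  unfolding convex_alt
proof (intro ballI allI impI)
  fix x y and u :: real
  assume "x \<in> convex_combinations f" "y \<in> convex_combinations f" and u: "0 \<le> u \<and> u \<le> 1"
  then obtain a K b M where
    "convex_coeffs a K" "x = (\<Sum>i\<le>K. a i *\<^sub>R f i)"
    "convex_coeffs b M" "y = (\<Sum>i\<le>M. b i *\<^sub>R f i)"
    unfolding convex_combinations_def mem_Collect_eq by blast
  then obtain a' b' where
    a': "convex_coeffs a' (max K M)" "x = (\<Sum>i\<le>max K M. a' i *\<^sub>R f i)" and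
    b': "convex_coeffs b' (max K M)" "y = (\<Sum>i\<le>max K M. b' i *\<^sub>R f i)"
    using convex_coeffs_pad[of a K "max K M" f] convex_coeffs_pad[of b M "max K M" f]
    by (metis max.cobounded1 max.cobounded2)
  have "convex_coeffs (\<lambda>i. (1 - u) * a' i + u * b' i) (max K M)"
    using convex_coeffs_mix a'(1) b'(1) u by blast
  moreover have "(1 - u) *\<^sub>R x + u *\<^sub>R y = (\<Sum>i\<le>max K M. ((1 - u) * a' i + u * b' i) *\<^sub>R f i)"
    unfolding sum_scaleR_mix a'(2) b'(2) ..
  ultimately show "(1 - u) *\<^sub>R x + u *\<^sub>R y \<in> convex_combinations f"
    unfolding convex_combinations_def by blast
qed

lemma range_subset_convex_combinations: "range f \<subseteq> convex_combinations f"
proof safe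
  fix n
  show "f n \<in> convex_combinations f"
    unfolding convex_combinations_def mem_Collect_eq
    using convex_coeffs_unit[of n] sum_scaleR_unit[of n f, symmetric] by (intro exI conjI)
qed

lemma convex_hull_range_subset_convex_combinations:
  "convex hull (range f) \<subseteq> convex_combinations f"
  by (intro hull_minimal range_subset_convex_combinations convex_convex_combinations)

lemma segment_start_in_ball:
  fixes x y z :: "'a::real_normed_vector"
  assumes "dist y x < \<epsilon>"
  obtains d where "0 < d" "d \<le> 1" "dist ((1 - d) *\<^sub>R y + d *\<^sub>R z) x < \<epsilon>"
proof
  define r where "r = (\<epsilon> - dist y x) / (norm (z - y) + 1)"
  define d where "d = min 1 r"
  have "norm (z - y) + 1 > 0"
    by (simp add: add_nonneg_pos)
  then have "r > 0" "r * (norm (z - y) + 1) = \<epsilon> - dist y x"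
    using assms by (simp_all add: r_def)
  then have r: "r * norm (z - y) < \<epsilon> - dist y x"
    by (simp add: distrib_left)
  show "0 < d" "d \<le> 1"
    using \<open>r > 0\<close> by (auto simp: d_def)
  have "(1 - d) *\<^sub>R y + d *\<^sub>R z - x = (y - x) + d *\<^sub>R (z - y)"
    by (simp add: algebra_simps)
  then have "dist ((1 - d) *\<^sub>R y + d *\<^sub>R z) x = norm ((y - x) + d *\<^sub>R (z - y))"
    by (simp only: dist_norm)
  also have "\<dots> \<le> dist y x + d * norm (z - y)"
    using \<open>0 < d\<close> norm_triangle_ineq[of "y - x" "d *\<^sub>R (z - y)"] by (simp add: dist_norm)
  also have "d * norm (z - y) \<le> r * norm (z - y)"
    by (simp add: d_def mult_right_mono)
  finally show "dist ((1 - d) *\<^sub>R y + d *\<^sub>R z) x < \<epsilon>"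
    using r by linarith
qed

lemma closure_convex_hull_range_approx_high_degree:
  fixes f :: "nat \<Rightarrow> 'a::real_normed_vector"
  assumes "x \<in> closure (convex hull (range f))" "\<epsilon> > 0"
  shows "\<exists>k a. k > N \<and> convex_coeffs a k \<and> a k > 0 \<and> norm ((\<Sum>i\<le>k. a i *\<^sub>R f i) - x) < \<epsilon>"
proof -
  obtain y where y: "y \<in> convex hull (range f)" "dist y x < \<epsilon>"
    using assms unfolding closure_approachable by blast
  then have "y \<in> convex_combinations f"
    using convex_hull_range_subset_convex_combinations by blast
  then obtain a K where a: "convex_coeffs a K" "y = (\<Sum>i\<le>K. a i *\<^sub>R f i)"
    unfolding convex_combinations_def by blast
  define k where "k = K + N + 1"
  have "K \<le> k" "N < k"
    by (simp_all add: k_def)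
  obtain b where b: "convex_coeffs b k" "(\<Sum>i\<le>k. b i *\<^sub>R f i) = y"
    using convex_coeffs_pad[OF a(1) \<open>K \<le> k\<close>, of f] unfolding a(2) by blast
  obtain d where d: "0 < d" "d \<le> 1" "dist ((1 - d) *\<^sub>R y + d *\<^sub>R f k) x < \<epsilon>"
    using segment_start_in_ball[OF y(2)] .
  define c where "c i = (1 - d) * b i + d * (if i = k then 1 else 0)" for i
  have "convex_coeffs c k"
    unfolding c_def using convex_coeffs_mix[OF b(1) convex_coeffs_unit] d(1,2) by simp
  moreover have "c k > 0"
    using b(1) d(1,2) by (simp add: c_def convex_coeffs_def add_nonneg_pos)
  moreover have "(\<Sum>i\<le>k. c i *\<^sub>R f i) = (1 - d) *\<^sub>R y + d *\<^sub>R f k"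
    unfolding c_def sum_scaleR_mix sum_scaleR_unit b(2) ..
  ultimately show ?thesis
    using \<open>N < k\<close> d(3) unfolding dist_norm by (intro exI[of _ k] exI[of _ c] conjI) simp_all
qed

theorem lemma2p2:
  fixes sc :: "complex \<Rightarrow> 'a::banach \<Rightarrow> 'a" and T :: "'a \<Rightarrow> 'a"
    and x0 x :: 'a and \<epsilon> :: real and N0 :: nat
  assumes "complex_scaling sc"
    and "bounded_complex_linear sc T"
    and "convex_cyclic T x0"
    and "\<epsilon> > 0"
  shows "\<exists>k a. k > N0 \<and> convex_coeffs a k \<and> a k > 0 \<and> norm (poly_op a k T x0 - x) < \<epsilon>"
proof -
  have "range (\<lambda>n. (T ^^ n) x0) = {(T ^^ n) x0 | n. True}"
    by auto
  with assms(3) have "x \<in> closure (convex hull (range (\<lambda>n. (T ^^ n) x0)))"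
    by (simp add: convex_cyclic_def)
  from closure_convex_hull_range_approx_high_degree[OF this assms(4)] show ?thesis
    by (simp add: poly_op_def)
qed

end
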